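(* Let $X$ be a triangulation of a convex polygon using only the polygon's vertices, regarded as a $2$-dimensional simplicial complex whose facets are the triangles, and let $r\ge1$, $s\ge1$ be integers. There is a bijection between partitions of the vertices of $X$ into $r+2$ non-empty parts, each $(s+1)$-scattered, and partitions of the triangles of $X$ into $r$ non-empty parts, each $s$-scattered.
   Context: A walk is a sequence of triangles $f_1,\dots,f_p$ ($p\ge1$) in which consecutive triangles share an edge. For triangles $f,g$, $\mathrm{dist}(f,g)$ is the minimal $p-1$ over walks with $f_1=f$, $f_p=g$. For distinct vertices $v,w$, $\mathrm{dist}(v,w)$ is the minimal $p\ge1$ such that there is a walk $f_1,\dots,f_p$ with $v\in f_1$ and $w\in f_p$. A set of vertices (resp. triangles) is $s$-scattered if any two distinct elements have distance $\ge s$. *)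

theory Defs
  imports Main "HOL-Library.Disjoint_Sets"
begin

text \<open>The polygon has vertices 0, 1, ..., n-1 in cyclic order. A triangle
is a 3-element set of vertices. \<open>poly_triang i j T\<close> says that T is a
triangulation of the convex sub-polygon with vertices i, i+1, ..., j (for j = i+1
this degenerate polygon is an edge and T is empty). Every triangulation of a
convex polygon arises by the standard recursive decomposition: the edge {i,j}
lies in a unique triangle {i,k,j}, which splits the polygon into the two
sub-polygons i..k and k..j.\<close>

inductive poly_triang :: "nat \<Rightarrow> nat \<Rightarrow> nat set set \<Rightarrow> bool" where
  edge: "poly_triang i (Suc i) {}"
| split: "\<lbrakk>i < k; k < j; poly_triang i k T1; poly_triang k j T2\<rbrakk>
          \<Longrightarrow> poly_triang i j ({{i, k, j}} \<union> T1 \<union> T2)"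

definition polygon_triangulation :: "nat \<Rightarrow> nat set set \<Rightarrow> bool" where
  "polygon_triangulation n T \<longleftrightarrow> n \<ge> 3 \<and> poly_triang 0 (n - 1) T"

definition walk :: "nat set set \<Rightarrow> nat set list \<Rightarrow> bool" where
  "walk T ws \<longleftrightarrow> ws \<noteq> [] \<and> set ws \<subseteq> T \<and>
     (\<forall>i. Suc i < length ws \<longrightarrow> card (ws ! i \<inter> ws ! Suc i) \<ge> 2)"

definition tri_dist :: "nat set set \<Rightarrow> nat set \<Rightarrow> nat set \<Rightarrow> nat" where
  "tri_dist T f g = (LEAST d. \<exists>ws. walk T ws \<and> hd ws = f \<and> last ws = g \<and> length ws = d + 1)"

definition vert_dist :: "nat set set \<Rightarrow> nat \<Rightarrow> nat \<Rightarrow> nat" where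
  "vert_dist T v w = (LEAST p. \<exists>ws. walk T ws \<and> v \<in> hd ws \<and> w \<in> last ws \<and> length ws = p)"

definition vert_scattered :: "nat set set \<Rightarrow> nat \<Rightarrow> nat set \<Rightarrow> bool" where
  "vert_scattered T s A \<longleftrightarrow> (\<forall>v\<in>A. \<forall>w\<in>A. v \<noteq> w \<longrightarrow> vert_dist T v w \<ge> s)"

definition tri_scattered :: "nat set set \<Rightarrow> nat \<Rightarrow> nat set set \<Rightarrow> bool" where
  "tri_scattered T s A \<longleftrightarrow> (\<forall>f\<in>A. \<forall>g\<in>A. f \<noteq> g \<longrightarrow> tri_dist T f g \<ge> s)"

end

theory Submission
  imports Defs
begin

text \<open>
Root the dual tree of the triangulation at the triangle on the edge \<open>{0, n - 1}\<close>: every other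
triangle has as parent the triangle on the other side of its long edge, and the walk distance of two
triangles is their distance in this tree. Scattered partitions are then partitions into independent
sets of two conflict graphs, one on vertices and one on triangles.

Delete a deepest triangle \<open>t\<close>; its apex is a vertex of no other triangle. If the ball of radius
\<open>s - 1\<close> around \<open>t\<close> contains \<open>c\<close> triangles, it spans \<open>c + 2\<close> vertices, and the conflict
neighbourhoods of the apex and of \<open>t\<close> are cliques of sizes \<open>c + 1\<close> and \<open>c - 1\<close>. Inserting an
element whose neighbourhood is a clique \<open>N\<close> changes the number of independent partitions into
\<open>m\<close> blocks by the rule \<open>p'(m) = (m - |N|) p(m) + p(m - 1)\<close>, so the vertex counts with \<open>m + 2\<close>
blocks and the triangle counts with \<open>m\<close> blocks obey the same recurrence. Induction on the number of
triangles shows that the two finite sets have the same cardinality.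
\<close>

section \<open>Partitions into independent sets\<close>

lemma finite_obtain_argmax:
  fixes f :: "'a \<Rightarrow> 'b::linorder"
  assumes "finite A" "a \<in> A"
  obtains m where "m \<in> A" "\<And>x. x \<in> A \<Longrightarrow> f x \<le> f m"
proof -
  have "Max (f ` A) \<in> f ` A" using assms by (intro Max_in) auto
  then obtain m where "m \<in> A" "f m = Max (f ` A)" by (metis imageE)
  then show ?thesis using that assms(1) by simp
qed

lemma finite_obtain_argmin:
  fixes f :: "'a \<Rightarrow> 'b::linorder"
  assumes "finite A" "a \<in> A"
  obtains m where "m \<in> A" "\<And>x. x \<in> A \<Longrightarrow> f m \<le> f x"
proof -
  have "Min (f ` A) \<in> f ` A" using assms by (intro Min_in) auto
  then obtain m where "m \<in> A" "f m = Min (f ` A)" by (metis imageE)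
  then show ?thesis using that assms(1) by simp
qed

definition independent :: "('a \<Rightarrow> 'a \<Rightarrow> bool) \<Rightarrow> 'a set \<Rightarrow> bool" where
  "independent R B \<longleftrightarrow> (\<forall>a\<in>B. \<forall>b\<in>B. a \<noteq> b \<longrightarrow> \<not> R a b)"

definition clique :: "('a \<Rightarrow> 'a \<Rightarrow> bool) \<Rightarrow> 'a set \<Rightarrow> bool" where
  "clique R K \<longleftrightarrow> (\<forall>a\<in>K. \<forall>b\<in>K. a \<noteq> b \<longrightarrow> R a b)"

definition indep_partitions :: "('a \<Rightarrow> 'a \<Rightarrow> bool) \<Rightarrow> 'a set \<Rightarrow> nat \<Rightarrow> 'a set set set" where
  "indep_partitions R X m = {P. partition_on X P \<and> card P = m \<and> (\<forall>B\<in>P. independent R B)}"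

lemma independent_clique_eq:
  assumes "independent R B" "clique R K" "a \<in> B \<inter> K" "b \<in> B \<inter> K"
  shows "a = b"
  using assms unfolding independent_def clique_def by blast

lemma independent_subset: "independent R B \<Longrightarrow> A \<subseteq> B \<Longrightarrow> independent R A"
  unfolding independent_def by blast

lemma indep_partitions_0:
  assumes "finite X" "X \<noteq> {}"
  shows "indep_partitions R X 0 = {}"
proof -
  have False if "P \<in> indep_partitions R X 0" for P
  proof -
    have P: "partition_on X P" "card P = 0" using that by (auto simp: indep_partitions_def)
    then have "P = {}" using finite_elements[OF assms(1) P(1)] by simp
    then show False using partition_onD1[OF P(1)] assms(2) by simp
  qed
  then show ?thesis by blast
qed

lemma finite_indep_partitions: "finite X \<Longrightarrow> finite (indep_partitions R X m)"
  by (rule finite_subset[OF _ finitely_many_partition_on[of X]]) (auto simp: indep_partitions_def)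

lemma indep_partitions_cong:
  assumes "\<And>a b. a \<in> X \<Longrightarrow> b \<in> X \<Longrightarrow> R a b \<longleftrightarrow> R' a b"
  shows "indep_partitions R X m = indep_partitions R' X m"
proof -
  have "independent R B \<longleftrightarrow> independent R' B" if "partition_on X P" "B \<in> P" for P B
  proof -
    have "B \<subseteq> X" using partition_onD1[OF that(1)] that(2) by blast
    then show ?thesis using assms unfolding independent_def by (meson subsetD)
  qed
  then show ?thesis
    unfolding indep_partitions_def by (intro Collect_cong) (meson conj_cong ball_cong)
qed

lemma card_blocks_meeting_clique:
  assumes P: "partition_on X P" and ind: "\<forall>B\<in>P. independent R B"
    and K: "K \<subseteq> X" "clique R K" and fin: "finite X"
  shows "card {B\<in>P. B \<inter> K \<noteq> {}} = card K"
proof -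
  let ?M = "{B\<in>P. B \<inter> K \<noteq> {}}"
  have single: "card (B \<inter> K) = 1" if B: "B \<in> ?M" for B
  proof -
    obtain y where y: "y \<in> B \<inter> K" using B by blast
    have "B \<inter> K = {y}"
      using independent_clique_eq[of R B K _ y] ind K(2) B y by blast
    then show ?thesis by simp
  qed
  have "K = (\<Union>B\<in>?M. B \<inter> K)" using partition_onD1[OF P] K(1) by blast
  then have "card K = card (\<Union>B\<in>?M. B \<inter> K)" by simp
  also have "\<dots> = (\<Sum>B\<in>?M. card (B \<inter> K))"
  proof (rule card_UN_disjoint)
    show "finite ?M" using finite_elements[OF fin P] by simp
    show "\<forall>B\<in>?M. finite (B \<inter> K)" using K(1) fin finite_subset by blast
    show "\<forall>B\<in>?M. \<forall>C\<in>?M. B \<noteq> C \<longrightarrow> (B \<inter> K) \<inter> (C \<inter> K) = {}"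
      using partition_onD2[OF P] by (auto simp: disjoint_def)
  qed
  also have "\<dots> = card ?M" using single by simp
  finally show ?thesis by simp
qed

lemma card_clique_le_blocks:
  assumes "P \<in> indep_partitions R X m" "K \<subseteq> X" "clique R K" "finite X"
  shows "card K \<le> m"
proof -
  have P: "partition_on X P" "card P = m" "\<forall>B\<in>P. independent R B"
    using assms(1) by (auto simp: indep_partitions_def)
  have "card {B\<in>P. B \<inter> K \<noteq> {}} \<le> card P"
    using finite_elements[OF assms(4) P(1)] by (intro card_mono) auto
  then show ?thesis using card_blocks_meeting_clique[OF P(1,3) assms(2-4)] P(2) by simp
qed

lemma indep_partition_of_clique:
  assumes "clique R X" "partition_on X P" "\<forall>B\<in>P. independent R B"
  shows "P = (\<lambda>x. {x}) ` X"
proof -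
  have single: "B = {x}" if "B \<in> P" "x \<in> B" for B x
  proof -
    have "B \<subseteq> X" using partition_onD1[OF assms(2)] that(1) by blast
    then have "B \<inter> X = B" by blast
    then show ?thesis
      using independent_clique_eq[of R B X _ x] assms(1,3) that by blast
  qed
  show ?thesis
  proof
    show "P \<subseteq> (\<lambda>x. {x}) ` X"
    proof
      fix B assume B: "B \<in> P"
      obtain x where x: "x \<in> B" using B partition_onD3[OF assms(2)] by (metis equals0I)
      then have "x \<in> X" using B partition_onD1[OF assms(2)] by blast
      then show "B \<in> (\<lambda>x. {x}) ` X" using single[OF B x] by blast
    qed
    show "(\<lambda>x. {x}) ` X \<subseteq> P"
    proof
      fix S assume "S \<in> (\<lambda>x. {x}) ` X"
      then obtain x where x: "x \<in> X" "S = {x}" by blast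
      then obtain B where B: "B \<in> P" "x \<in> B" using partition_onD1[OF assms(2)] by blast
      show "S \<in> P" using single[OF B] B(1) x(2) by simp
    qed
  qed
qed

lemma card_indep_partitions_clique:
  assumes "clique R X" "finite X"
  shows "card (indep_partitions R X m) = (if m = card X then 1 else 0)"
proof -
  let ?S = "(\<lambda>x. {x}) ` X"
  have S: "partition_on X ?S" "\<forall>B\<in>?S. independent R B" "card ?S = card X"
    by (auto simp: partition_on_singletons independent_def card_image)
  have "P \<in> indep_partitions R X m \<longleftrightarrow> P = ?S \<and> m = card X" for P
  proof
    assume "P \<in> indep_partitions R X m"
    then have P: "partition_on X P" "card P = m" "\<forall>B\<in>P. independent R B"
      by (auto simp: indep_partitions_def)
    then show "P = ?S \<and> m = card X" using indep_partition_of_clique[OF assms(1)] S(3) by metis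
  qed (use S in \<open>simp add: indep_partitions_def\<close>)
  then have "indep_partitions R X m = (if m = card X then {?S} else {})" by auto
  then show ?thesis by simp
qed

lemma partition_on_insert_singleton:
  assumes "partition_on X P" "x \<notin> X"
  shows "partition_on (insert x X) (insert {x} P)"
proof -
  have "disjnt {x} (\<Union>P)" using partition_onD1[OF assms(1)] assms(2) by (simp add: disjnt_def)
  from partition_on_insert[OF this, of "insert x X"] show ?thesis
    using assms by (simp add: insert_Diff_if)
qed

lemma partition_on_remove_singleton:
  assumes "partition_on (insert x X) P" "{x} \<in> P" "x \<notin> X"
  shows "partition_on X (P - {{x}})"
proof -
  have "x \<notin> B" if "B \<in> P - {{x}}" for B
    using disjointD[OF partition_onD2[OF assms(1)] assms(2), of B] that by blast
  then have "disjnt {x} (\<Union>(P - {{x}}))" by (auto simp: disjnt_def)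
  from partition_on_insert[OF this, of "insert x X"] show ?thesis
    using assms by (simp add: insert_absorb)
qed

lemma partition_on_insert_into_block:
  assumes "partition_on X P" "C \<in> P" "x \<notin> X"
  shows "partition_on (insert x X) (insert (insert x C) (P - {C}))"
proof -
  have disj: "disjnt C (\<Union>(P - {C}))"
    using partition_onD2[OF assms(1)] assms(2) by (auto simp: disjnt_def disjoint_def)
  from partition_on_insert[OF disj, of X]
  have rest: "partition_on (X - C) (P - {C})" "C \<subseteq> X" "C \<noteq> {}"
    using assms(1,2) by (simp_all add: insert_absorb)
  have "disjnt (insert x C) (\<Union>(P - {C}))"
    using disj partition_onD1[OF assms(1)] assms(3) by (auto simp: disjnt_def)
  moreover have "insert x X - insert x C = X - C" using assms(3) by blast
  ultimately show ?thesis using partition_on_insert rest by (metis insert_mono insert_not_empty)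
qed

lemma partition_on_remove_from_block:
  assumes "partition_on (insert x X) P" "C \<in> P" "x \<in> C" "C \<noteq> {x}" "x \<notin> X"
  shows "partition_on X (insert (C - {x}) (P - {C}))"
proof -
  have disj: "disjnt C (\<Union>(P - {C}))"
    using partition_onD2[OF assms(1)] assms(2) by (auto simp: disjnt_def disjoint_def)
  from partition_on_insert[OF disj, of "insert x X"]
  have rest: "partition_on (insert x X - C) (P - {C})" "C \<subseteq> insert x X"
    using assms(1,2) by (simp_all add: insert_absorb)
  have "disjnt (C - {x}) (\<Union>(P - {C}))" using disj by (auto simp: disjnt_def)
  moreover have "X - (C - {x}) = insert x X - C" using assms(3,5) by blast
  moreover have "C - {x} \<subseteq> X" "C - {x} \<noteq> {}" using rest(2) assms(3,4) by blast+
  ultimately show ?thesis using partition_on_insert rest(1) by metis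
qed

lemma card_indep_partitions_singleton_block:
  assumes "finite X" "x \<notin> X"
  shows "card {P \<in> indep_partitions R (insert x X) (Suc m). {x} \<in> P} = card (indep_partitions R X m)"
proof -
  have "bij_betw (\<lambda>P. P - {{x}}) {P \<in> indep_partitions R (insert x X) (Suc m). {x} \<in> P}
          (indep_partitions R X m)"
  proof (rule bij_betw_byWitness[where f' = "insert {x}"])
    show "\<forall>P\<in>{P \<in> indep_partitions R (insert x X) (Suc m). {x} \<in> P}. insert {x} (P - {{x}}) = P"
      by auto
    show "\<forall>P\<in>indep_partitions R X m. insert {x} P - {{x}} = P"
      using assms(2) by (auto simp: indep_partitions_def partition_on_def)
    show "(\<lambda>P. P - {{x}}) ` {P \<in> indep_partitions R (insert x X) (Suc m). {x} \<in> P}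
            \<subseteq> indep_partitions R X m"
    proof (rule image_subsetI, clarify)
      fix P assume P: "P \<in> indep_partitions R (insert x X) (Suc m)" "{x} \<in> P"
      then have "finite P"
        using finite_elements[of "insert x X" P] assms(1) by (simp add: indep_partitions_def)
      then show "P - {{x}} \<in> indep_partitions R X m"
        using P partition_on_remove_singleton[of x X P] assms(2) by (simp add: indep_partitions_def)
    qed
    show "insert {x} ` indep_partitions R X m
            \<subseteq> {P \<in> indep_partitions R (insert x X) (Suc m). {x} \<in> P}"
    proof (rule image_subsetI, simp only: mem_Collect_eq insertI1 simp_thms)
      fix Q assume Q: "Q \<in> indep_partitions R X m"
      then have "finite Q" "{x} \<notin> Q"
        using finite_elements[OF assms(1)] assms(2) by (auto simp: indep_partitions_def partition_on_def)
      then show "insert {x} Q \<in> indep_partitions R (insert x X) (Suc m)"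
        using Q partition_on_insert_singleton[of X Q x] assms(2)
        by (auto simp: indep_partitions_def independent_def)
    qed
  qed
  then show ?thesis by (rule bij_betw_same_card)
qed

lemma bij_betw_join_block:
  assumes "finite X" "x \<notin> X" "symp R"
  shows "bij_betw (\<lambda>(P, C). insert (insert x C) (P - {C}))
           (SIGMA P:indep_partitions R X m. {C \<in> P. \<forall>c\<in>C. \<not> R x c})
           {P \<in> indep_partitions R (insert x X) m. {x} \<notin> P}"
proof -
  let ?h = "\<lambda>(P, C). insert (insert x C) (P - {C})"
  let ?S = "SIGMA P:indep_partitions R X m. {C \<in> P. \<forall>c\<in>C. \<not> R x c}"
  have x_notin: "x \<notin> \<Union>P" if "P \<in> indep_partitions R X m" for P
    using that assms(2) by (auto simp: indep_partitions_def partition_on_def)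
  have "inj_on ?h ?S"
  proof (rule inj_onI)
    fix a b assume a: "a \<in> ?S" and b: "b \<in> ?S" and ab: "?h a = ?h b"
    obtain P C Q D where ab_eq: "a = (P, C)" "b = (Q, D)" by fastforce
    have PC: "(P, C) \<in> ?S" and QD: "(Q, D) \<in> ?S" using a b ab_eq by auto
    have eq: "insert (insert x C) (P - {C}) = insert (insert x D) (Q - {D})"
      using ab ab_eq by simp
    have xP: "x \<notin> \<Union>P" and xQ: "x \<notin> \<Union>Q" using PC QD x_notin by auto
    have "insert x C \<in> insert (insert x D) (Q - {D})" using eq by blast
    moreover have "insert x C \<notin> Q" using xQ by (metis UnionI insertI1)
    ultimately have "insert x C = insert x D" by blast
    moreover have "x \<notin> C" "x \<notin> D" using xP xQ PC QD by auto
    ultimately have CD: "C = D" by (simp add: insert_ident)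
    have "P - {C} = insert (insert x C) (P - {C}) - {insert x C}" using xP by blast
    also have "\<dots> = insert (insert x C) (Q - {C}) - {insert x C}" using eq CD by simp
    also have "\<dots> = Q - {C}" using xQ by blast
    finally have "P - {C} = Q - {C}" .
    moreover have "C \<in> P" "C \<in> Q" using PC QD CD by auto
    ultimately have "P = Q" by (metis insert_Diff)
    then show "a = b" using ab_eq CD by simp
  qed
  moreover have "?h ` ?S \<subseteq> {P \<in> indep_partitions R (insert x X) m. {x} \<notin> P}"
  proof clarify
    fix P C assume P: "P \<in> indep_partitions R X m" and C: "C \<in> P" "\<forall>c\<in>C. \<not> R x c"
    have part: "partition_on X P" "card P = m" "\<forall>B\<in>P. independent R B"
      using P by (auto simp: indep_partitions_def)
    have xP: "x \<notin> \<Union>P" using x_notin[OF P] .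
    have "C \<noteq> {}" using partition_onD3[OF part(1)] C(1) by blast
    then have "{x} \<notin> insert (insert x C) (P - {C})" using xP C(1) by blast
    moreover have "card (insert (insert x C) (P - {C})) = m"
    proof -
      have "insert x C \<notin> P - {C}" using xP by blast
      moreover have "finite P" using finite_elements[OF assms(1) part(1)] .
      moreover have "0 < card P" using C(1) calculation(2) card_gt_0_iff by blast
      ultimately show ?thesis using C(1) part(2) by (simp add: card_insert_if)
    qed
    moreover have "independent R (insert x C)"
      using part(3) C assms(3) unfolding independent_def by (metis insert_iff sympD)
    ultimately show "insert (insert x C) (P - {C}) \<in> indep_partitions R (insert x X) m
                       \<and> {x} \<notin> insert (insert x C) (P - {C})"
      using partition_on_insert_into_block[OF part(1) C(1) assms(2)] part(3)
      by (auto simp: indep_partitions_def)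
  qed
  moreover have "{P \<in> indep_partitions R (insert x X) m. {x} \<notin> P} \<subseteq> ?h ` ?S"
  proof clarify
    fix Z assume Z: "Z \<in> indep_partitions R (insert x X) m" "{x} \<notin> Z"
    have part: "partition_on (insert x X) Z" "card Z = m" "\<forall>B\<in>Z. independent R B"
      using Z(1) by (auto simp: indep_partitions_def)
    obtain C where C: "C \<in> Z" "x \<in> C" using partition_onD1[OF part(1)] by blast
    have Cx: "C \<noteq> {x}" using C Z(2) by blast
    define P where "P = insert (C - {x}) (Z - {C})"
    have "C - {x} \<noteq> {}" using C(2) Cx by blast
    moreover have "B \<inter> C = {}" if "B \<in> Z - {C}" for B
      using disjointD[OF partition_onD2[OF part(1)], of B C] C(1) that by blast
    ultimately have fresh: "C - {x} \<notin> Z - {C}" by blast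
    have indC: "independent R C" using part(3) C(1) by blast
    have "partition_on X P"
      using partition_on_remove_from_block[OF part(1) C Cx assms(2)] by (simp add: P_def)
    moreover have "card P = m"
    proof -
      have "finite Z" using finite_elements[OF _ part(1)] assms(1) by simp
      moreover have "0 < card Z" using C(1) calculation card_gt_0_iff by blast
      ultimately show ?thesis using fresh C(1) part(2) by (simp add: P_def card_insert_if)
    qed
    moreover have "\<forall>B\<in>P. independent R B"
      using part(3) indC unfolding P_def by (auto intro: independent_subset)
    moreover have "\<forall>c\<in>C - {x}. \<not> R x c"
      using indC C(2) by (auto simp: independent_def)
    moreover have "?h (P, C - {x}) = Z"
    proof -
      have "insert x (C - {x}) = C" using C(2) by blast
      moreover have "P - {C - {x}} = Z - {C}" using fresh by (auto simp: P_def)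
      ultimately show ?thesis using C(1) by auto
    qed
    ultimately show "Z \<in> ?h ` ?S"
      by (intro rev_image_eqI[of "(P, C - {x})"]) (auto simp: indep_partitions_def P_def)
  qed
  ultimately show ?thesis unfolding bij_betw_def by blast
qed

lemma card_indep_partitions_join_block:
  assumes "finite X" "x \<notin> X" "symp R" "clique R {y\<in>X. R x y}"
  shows "card {P \<in> indep_partitions R (insert x X) m. {x} \<notin> P}
           = (m - card {y\<in>X. R x y}) * card (indep_partitions R X m)"
proof -
  let ?N = "{y\<in>X. R x y}"
  have blocks: "card {C \<in> P. \<forall>c\<in>C. \<not> R x c} = m - card ?N"
    if "P \<in> indep_partitions R X m" for P
  proof -
    have P: "partition_on X P" "card P = m" "\<forall>B\<in>P. independent R B"
      using that by (auto simp: indep_partitions_def)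
    have "{C \<in> P. \<forall>c\<in>C. \<not> R x c} = P - {C \<in> P. C \<inter> ?N \<noteq> {}}"
      using partition_onD1[OF P(1)] by blast
    then show ?thesis
      using card_blocks_meeting_clique[OF P(1,3) _ assms(4,1)] finite_elements[OF assms(1) P(1)] P(2)
      by (simp add: card_Diff_subset)
  qed
  have "card {P \<in> indep_partitions R (insert x X) m. {x} \<notin> P}
          = card (SIGMA P:indep_partitions R X m. {C \<in> P. \<forall>c\<in>C. \<not> R x c})"
    using bij_betw_same_card[OF bij_betw_join_block[OF assms(1-3)]] by simp
  also have "\<dots> = (\<Sum>P\<in>indep_partitions R X m. card {C \<in> P. \<forall>c\<in>C. \<not> R x c})"
    using finite_indep_partitions[OF assms(1)] finite_elements[OF assms(1)]
    by (intro card_SigmaI) (auto simp: indep_partitions_def)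
  also have "\<dots> = (m - card ?N) * card (indep_partitions R X m)"
    using blocks by simp
  finally show ?thesis .
qed

lemma card_indep_partitions_insert:
  assumes "finite X" "x \<notin> X" "symp R" "clique R {y\<in>X. R x y}"
  shows "card (indep_partitions R (insert x X) (Suc m))
           = (Suc m - card {y\<in>X. R x y}) * card (indep_partitions R X (Suc m))
             + card (indep_partitions R X m)"
proof -
  let ?A = "{P \<in> indep_partitions R (insert x X) (Suc m). {x} \<in> P}"
  let ?B = "{P \<in> indep_partitions R (insert x X) (Suc m). {x} \<notin> P}"
  have "indep_partitions R (insert x X) (Suc m) = ?B \<union> ?A" by blast
  then have "card (indep_partitions R (insert x X) (Suc m)) = card (?B \<union> ?A)" by simp
  also have "\<dots> = card ?B + card ?A"
    using finite_indep_partitions[of "insert x X"] assms(1) by (intro card_Un_disjoint) auto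
  finally show ?thesis
    using card_indep_partitions_join_block[OF assms] card_indep_partitions_singleton_block[OF assms(1,2)]
    by simp
qed

section \<open>Triangles and the dual tree\<close>

definition is_tri :: "nat set \<Rightarrow> bool" where
  "is_tri f \<longleftrightarrow> (\<exists>a b c. a < b \<and> b < c \<and> f = {a, b, c})"

text \<open>The apex of a triangle, opposite to its long edge \<open>{Min f, Max f}\<close>.\<close>

definition tri_mid :: "nat set \<Rightarrow> nat" where
  "tri_mid f = Min (f - {Min f})"

lemma Min_Max_tri_mid_triple:
  assumes "a < b" "b < c"
  shows "Min {a,b,c} = a" "Max {a,b,c} = c" "tri_mid {a,b,c} = b"
proof -
  show m: "Min {a,b,c} = a" using assms by (simp add: min_def)
  show "Max {a,b,c} = c" using assms by (simp add: max_def)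
  have "{a,b,c} - {a} = {b,c}" using assms by auto
  then show "tri_mid {a,b,c} = b" using assms m by (simp add: tri_mid_def min_def)
qed

lemma is_tri_D:
  assumes "is_tri f"
  shows "f = {Min f, tri_mid f, Max f}" "Min f < tri_mid f" "tri_mid f < Max f" "finite f" "card f = 3"
proof -
  obtain a b c where abc: "a < b" "b < c" "f = {a,b,c}" using assms by (auto simp: is_tri_def)
  show "f = {Min f, tri_mid f, Max f}" "Min f < tri_mid f" "tri_mid f < Max f" "finite f" "card f = 3"
    using abc Min_Max_tri_mid_triple[OF abc(1,2)] by auto
qed

lemma is_tri_mem:
  assumes "is_tri f" "x \<in> f"
  shows "x = Min f \<or> x = tri_mid f \<or> x = Max f" "Min f \<le> x" "x \<le> Max f"
proof -
  have f: "f = {Min f, tri_mid f, Max f}" "Min f < tri_mid f" "tri_mid f < Max f" using is_tri_D[OF assms(1)] by auto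
  show "x = Min f \<or> x = tri_mid f \<or> x = Max f" using assms(2) f(1) by blast
  then show "Min f \<le> x" "x \<le> Max f" using f by auto
qed

lemma is_tri_vertices: "is_tri f \<Longrightarrow> Min f \<in> f \<and> tri_mid f \<in> f \<and> Max f \<in> f"
  using is_tri_D(1) by (metis insertI1 insert_commute)

text \<open>\<open>f\<close> lies in the sub-polygon cut off by one of the two short edges of \<open>g\<close>.\<close>

definition below :: "nat set \<Rightarrow> nat set \<Rightarrow> bool" where
  "below f g \<longleftrightarrow> (Min g \<le> Min f \<and> Max f \<le> tri_mid g) \<or> (tri_mid g \<le> Min f \<and> Max f \<le> Max g)"

lemma below_irrefl: "is_tri f \<Longrightarrow> \<not> below f f"
  using is_tri_D[of f] by (auto simp: below_def)

lemma below_bounds: "is_tri f \<Longrightarrow> is_tri g \<Longrightarrow> below f g \<Longrightarrow> Min g \<le> Min f \<and> Max f \<le> Max g"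
  using is_tri_D[of f] is_tri_D[of g] by (auto simp: below_def)

lemma below_trans:
  "is_tri f \<Longrightarrow> is_tri g \<Longrightarrow> is_tri h \<Longrightarrow> below f g \<Longrightarrow> below g h \<Longrightarrow> below f h"
  using is_tri_D[of f] is_tri_D[of g] is_tri_D[of h] unfolding below_def by linarith

lemma below_asym: "is_tri f \<Longrightarrow> is_tri g \<Longrightarrow> below f g \<Longrightarrow> \<not> below g f"
  using below_trans below_irrefl by blast

definition laminar :: "nat set set \<Rightarrow> bool" where
  "laminar T \<longleftrightarrow>
    (\<forall>f\<in>T. \<forall>g\<in>T. f \<noteq> g \<longrightarrow> below f g \<or> below g f \<or> Max f \<le> Min g \<or> Max g \<le> Min f)"

text \<open>\<open>ancestors T f\<close> is the path from \<open>f\<close> to the root of the dual tree, so \<open>tree_dist\<close>, the size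
of the symmetric difference of two such paths, is the distance in the dual tree.\<close>

definition ancestors :: "nat set set \<Rightarrow> nat set \<Rightarrow> nat set set" where
  "ancestors T f = {g\<in>T. g = f \<or> below f g}"

definition tree_dist :: "nat set set \<Rightarrow> nat set \<Rightarrow> nat set \<Rightarrow> nat" where
  "tree_dist T f g = card ((ancestors T f - ancestors T g) \<union> (ancestors T g - ancestors T f))"

text \<open>Vertices at distance at most \<open>s\<close> and triangles at distance less than \<open>s\<close>: the sets that are
\<open>(s + 1)\<close>- resp. \<open>s\<close>-scattered are the independent sets of these relations.\<close>

definition vert_conflict :: "nat set set \<Rightarrow> nat \<Rightarrow> nat \<Rightarrow> nat \<Rightarrow> bool" where
  "vert_conflict T s a b \<longleftrightarrow> (\<exists>f\<in>T. \<exists>g\<in>T. a \<in> f \<and> b \<in> g \<and> tree_dist T f g < s)"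

definition tri_conflict :: "nat set set \<Rightarrow> nat \<Rightarrow> nat set \<Rightarrow> nat set \<Rightarrow> bool" where
  "tri_conflict T s f g \<longleftrightarrow> tree_dist T f g < s"

lemma tree_dist_sym: "tree_dist T f g = tree_dist T g f"
  unfolding tree_dist_def by (simp add: Un_commute)

lemma symp_vert_conflict: "symp (vert_conflict T s)"
  unfolding vert_conflict_def symp_def using tree_dist_sym by metis

lemma symp_tri_conflict: "symp (tri_conflict T s)"
  unfolding tri_conflict_def symp_def using tree_dist_sym by metis

lemma tree_dist_self: "tree_dist T f f = 0" by (simp add: tree_dist_def)

lemma tree_dist_triangle: assumes "finite T" shows "tree_dist T f h \<le> tree_dist T f g + tree_dist T g h"
proof -
  let ?A = "ancestors T f" and ?B = "ancestors T g" and ?C = "ancestors T h"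
  have fin: "finite ?A" "finite ?B" "finite ?C" using assms by (auto simp: ancestors_def)
  have "(?A - ?C) \<union> (?C - ?A) \<subseteq> ((?A - ?B) \<union> (?B - ?A)) \<union> ((?B - ?C) \<union> (?C - ?B))" by auto
  then have "tree_dist T f h \<le> card (((?A - ?B) \<union> (?B - ?A)) \<union> ((?B - ?C) \<union> (?C - ?B)))"
    unfolding tree_dist_def using fin by (intro card_mono) auto
  also have "\<dots> \<le> tree_dist T f g + tree_dist T g h" unfolding tree_dist_def by (rule card_Un_le)
  finally show ?thesis .
qed

lemma card_symdiff:
  assumes "finite A" "finite B"
  shows "card ((A - B) \<union> (B - A)) + 2 * card (A \<inter> B) = card A + card B"
proof -
  have "card ((A - B) \<union> (B - A)) = card (A - B) + card (B - A)"
    using assms by (intro card_Un_disjoint) auto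
  moreover have "card (A - B) + card (A \<inter> B) = card A"
    using assms by (metis card_Diff_subset_Int card_mono inf_le1 le_add_diff_inverse2 finite_Int Int_commute inf_commute)
  moreover have "card (B - A) + card (A \<inter> B) = card B"
    using assms by (metis card_Diff_subset_Int card_mono inf_le2 le_add_diff_inverse2 finite_Int Int_commute)
  ultimately show ?thesis by simp
qed


lemma walk_single: "walk T [x] \<longleftrightarrow> x \<in> T"
  by (simp add: walk_def)

lemma walk_Cons: "walk T (x # y # ys) \<longleftrightarrow> x \<in> T \<and> 2 \<le> card (x \<inter> y) \<and> walk T (y # ys)"
  unfolding walk_def by (auto simp: All_less_Suc2)

lemma walk_snoc:
  "ws \<noteq> [] \<Longrightarrow> walk T (ws @ [y]) \<longleftrightarrow> walk T ws \<and> y \<in> T \<and> 2 \<le> card (last ws \<inter> y)"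
proof (induction ws rule: induct_list012)
  case (3 a b rest)
  then show ?case by (simp add: walk_Cons)
qed (auto simp: walk_Cons walk_def)

text \<open>The parent of a non-root triangle \<open>f\<close> is the triangle across its long edge.\<close>

locale rooted_triangulation =
  fixes T :: "nat set set" and \<rho> :: "nat set"
  assumes finite_T: "finite T" and root_in: "\<rho> \<in> T"
    and triangle: "\<And>f. f \<in> T \<Longrightarrow> is_tri f"
    and laminar_T: "laminar T"
    and root_or_below: "\<And>f. f \<in> T \<Longrightarrow> f = \<rho> \<or> below f \<rho>"
    and parent:
      "\<And>f. f \<in> T \<Longrightarrow> f \<noteq> \<rho> \<Longrightarrow> \<exists>p\<in>T. below f p \<and> Min f \<in> p \<and> Max f \<in> p"
begin

lemma laminarD:
  "f \<in> T \<Longrightarrow> g \<in> T \<Longrightarrow> f \<noteq> g \<Longrightarrow> below f g \<or> below g f \<or> Max f \<le> Min g \<or> Max g \<le> Min f"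
  using laminar_T by (auto simp: laminar_def)

lemma ancestors_self: "f \<in> T \<Longrightarrow> f \<in> ancestors T f" by (simp add: ancestors_def)
lemma ancestors_subset: "ancestors T f \<subseteq> T" by (auto simp: ancestors_def)
lemma finite_ancestors: "finite (ancestors T f)" using finite_T finite_subset[OF ancestors_subset] by blast

lemma ancestors_mono: "x \<in> T \<Longrightarrow> y \<in> T \<Longrightarrow> below x y \<Longrightarrow> ancestors T y \<subseteq> ancestors T x"
  unfolding ancestors_def using below_trans triangle by blast

lemma ancestors_notin: "x \<in> T \<Longrightarrow> y \<in> T \<Longrightarrow> below x y \<Longrightarrow> x \<notin> ancestors T y"
  unfolding ancestors_def using below_asym below_irrefl triangle by blast

lemma ancestors_card_less:
  "x \<in> T \<Longrightarrow> y \<in> T \<Longrightarrow> below x y \<Longrightarrow> card (ancestors T y) < card (ancestors T x)"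
proof -
  assume a: "x \<in> T" "y \<in> T" "below x y"
  have "ancestors T y \<subset> ancestors T x" using ancestors_mono[OF a] ancestors_notin[OF a] ancestors_self[OF a(1)] by blast
  then show ?thesis using finite_ancestors by (simp add: psubset_card_mono)
qed

lemma ancestors_trans: "f \<in> T \<Longrightarrow> g \<in> ancestors T f \<Longrightarrow> ancestors T g \<subseteq> ancestors T f"
  using ancestors_mono unfolding ancestors_def by auto

lemma root_ancestors: "f \<in> T \<Longrightarrow> \<rho> \<in> ancestors T f"
  using root_or_below root_in by (auto simp: ancestors_def)

lemma ancestors_bounds: "t \<in> T \<Longrightarrow> x \<in> ancestors T t \<Longrightarrow> Min x \<le> Min t \<and> Max t \<le> Max x"
  unfolding ancestors_def using below_bounds triangle by auto

lemma ancestors_comparable: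
  assumes t: "t \<in> T" and x: "x \<in> ancestors T t" and y: "y \<in> ancestors T t"
  shows "x \<in> ancestors T y \<or> y \<in> ancestors T x"
proof (cases "x = y")
  case True then show ?thesis using x ancestors_self ancestors_subset by auto
next
  case False
  have xT: "x \<in> T" and yT: "y \<in> T" using x y ancestors_subset by auto
  have bx: "Min x \<le> Min t \<and> Max t \<le> Max x" and byy: "Min y \<le> Min t \<and> Max t \<le> Max y"
    using ancestors_bounds t x y by auto
  have "Min t < Max t" using is_tri_D[OF triangle[OF t]] by simp
  then have "\<not> (Max x \<le> Min y \<or> Max y \<le> Min x)" using bx byy by linarith
  then consider "below x y" | "below y x"
    using laminarD[OF xT yT False] by blast
  then show ?thesis using xT yT by cases (auto simp: ancestors_def)
qed

lemma below_shared_edge: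
  assumes fT: "f \<in> T" and gT: "g \<in> T" and b: "below f g" and c: "2 \<le> card (f \<inter> g)"
  shows "Min f \<in> g \<and> Max f \<in> g"
proof -
  have tf: "is_tri f" and tg: "is_tri g" using triangle fT gT by auto
  have sub: "f \<inter> g \<subseteq> {Min f, Max f}"
  proof
    fix x assume x: "x \<in> f \<inter> g"
    have xf: "Min f \<le> x" "x \<le> Max f" using is_tri_mem[OF tf] x by auto
    have xg: "x = Min g \<or> x = tri_mid g \<or> x = Max g" using is_tri_mem[OF tg] x by auto
    have "x = Min f \<or> x = Max f"
      using b xf xg is_tri_D(2,3)[OF tg] unfolding below_def by (elim disjE conjE; linarith)
    then show "x \<in> {Min f, Max f}" by simp
  qed
  have "card {Min f, Max f} \<le> 2" by (simp add: card_insert_le_m1)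
  then have "f \<inter> g = {Min f, Max f}"
    using card_seteq[OF _ sub] c by simp
  then show ?thesis by auto
qed

lemma ancestors_parent:
  assumes fT: "f \<in> T" and pT: "p \<in> T" and b: "below f p" and e: "Min f \<in> p" "Max f \<in> p"
  shows "ancestors T f = insert f (ancestors T p)" "f \<notin> ancestors T p"
proof -
  show "f \<notin> ancestors T p" using ancestors_notin fT pT b by blast
  have tf: "is_tri f" and tp: "is_tri p" using triangle fT pT by auto
  show "ancestors T f = insert f (ancestors T p)"
  proof
    show "insert f (ancestors T p) \<subseteq> ancestors T f" using ancestors_self ancestors_mono fT pT b by auto
    show "ancestors T f \<subseteq> insert f (ancestors T p)"
    proof
      fix h assume h: "h \<in> ancestors T f"
      show "h \<in> insert f (ancestors T p)"
      proof (cases "h = f \<or> h = p")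
        case True then show ?thesis using ancestors_self pT by auto
      next
        case False
        have hT: "h \<in> T" and fh: "below f h" using h False by (auto simp: ancestors_def)
        have th: "is_tri h" using triangle hT by auto
        have mf: "Min f = Min p \<or> Min f = tri_mid p \<or> Min f = Max p" "Max f = Min p \<or> Max f = tri_mid p \<or> Max f = Max p"
          using is_tri_mem[OF tp] e by auto
        have "\<not> below h p"
        proof
          assume hp: "below h p"
          show False using mf b fh hp is_tri_D[OF tf] is_tri_D[OF tp] is_tri_D[OF th]
            unfolding below_def by linarith
        qed
        moreover have "\<not> (Max p \<le> Min h \<or> Max h \<le> Min p)"
          using below_bounds[OF tf tp b] below_bounds[OF tf th fh] is_tri_D[OF tf] by linarith
        ultimately have "below p h" using laminarD[OF pT hT] False by auto
        then show ?thesis using hT by (auto simp: ancestors_def)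
      qed
    qed
  qed
qed

lemma tree_dist_shared_edge:
  assumes fT: "f \<in> T" and gT: "g \<in> T" and c: "2 \<le> card (f \<inter> g)"
  shows "tree_dist T f g \<le> 1"
proof -
  have one: "tree_dist T x y = 1" if xT: "x \<in> T" and yT: "y \<in> T" and b: "below x y" and cc: "2 \<le> card (x \<inter> y)" for x y
  proof -
    have e: "Min x \<in> y" "Max x \<in> y" using below_shared_edge[OF xT yT b cc] by auto
    have a: "ancestors T x = insert x (ancestors T y)" "x \<notin> ancestors T y" using ancestors_parent[OF xT yT b e] by auto
    have "(ancestors T x - ancestors T y) \<union> (ancestors T y - ancestors T x) = {x}" using a by auto
    then show ?thesis by (simp add: tree_dist_def)
  qed
  show ?thesis
  proof (cases "f = g")
    case True then show ?thesis by (simp add: tree_dist_self)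
  next
    case False
    have tf: "is_tri f" and tg: "is_tri g" using triangle fT gT by auto
    have "\<not> (Max f \<le> Min g \<or> Max g \<le> Min f)"
    proof
      assume "Max f \<le> Min g \<or> Max g \<le> Min f"
      then have "\<exists>z. f \<inter> g \<subseteq> {z}"
      proof
        assume "Max f \<le> Min g"
        then have "f \<inter> g \<subseteq> {Max f}" using is_tri_mem(2,3)[OF tf] is_tri_mem(2,3)[OF tg] by fastforce
        then show ?thesis by blast
      next
        assume "Max g \<le> Min f"
        then have "f \<inter> g \<subseteq> {Max g}" using is_tri_mem(2,3)[OF tf] is_tri_mem(2,3)[OF tg] by fastforce
        then show ?thesis by blast
      qed
      then obtain z where "f \<inter> g \<subseteq> {z}" by blast
      then have "card (f \<inter> g) \<le> card {z}" by (intro card_mono) auto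
      then show False using c by simp
    qed
    then consider "below f g" | "below g f" using laminarD[OF fT gT False] by auto
    then show ?thesis
    proof cases
      case 1 then show ?thesis using one[OF fT gT 1 c] by simp
    next
      case 2 then show ?thesis using one[OF gT fT 2] c tree_dist_sym[of T f g] by (simp add: Int_commute)
    qed
  qed
qed


lemma parent_exists:
  assumes fT: "f \<in> T" and nr: "f \<noteq> \<rho>"
  shows "\<exists>p\<in>T. ancestors T f = insert f (ancestors T p) \<and> f \<notin> ancestors T p \<and> 2 \<le> card (f \<inter> p)"
proof -
  obtain p where p: "p \<in> T" "below f p" "Min f \<in> p" "Max f \<in> p" using parent[OF fT nr] by blast
  have a: "ancestors T f = insert f (ancestors T p)" "f \<notin> ancestors T p" using ancestors_parent[OF fT p] by auto
  have tf: "is_tri f" using triangle fT by auto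
  have "{Min f, Max f} \<subseteq> f \<inter> p" using p is_tri_vertices[OF tf] by auto
  moreover have "card {Min f, Max f} = 2" using is_tri_D[OF tf] by simp
  moreover have "finite (f \<inter> p)" using is_tri_D(4)[OF tf] by simp
  ultimately have "2 \<le> card (f \<inter> p)" by (metis card_mono)
  then show ?thesis using a p by blast
qed

lemma tree_dist_parent:
  assumes a: "ancestors T f = insert f (ancestors T p)" and b: "f \<notin> ancestors T p" and c: "f \<notin> ancestors T g"
  shows "tree_dist T f g = Suc (tree_dist T p g)"
proof -
  have e: "(ancestors T f - ancestors T g) \<union> (ancestors T g - ancestors T f)
      = insert f ((ancestors T p - ancestors T g) \<union> (ancestors T g - ancestors T p))"
    using a c by auto
  have "f \<notin> (ancestors T p - ancestors T g) \<union> (ancestors T g - ancestors T p)" using b c by auto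
  moreover have "finite ((ancestors T p - ancestors T g) \<union> (ancestors T g - ancestors T p))" using finite_ancestors by auto
  ultimately show ?thesis unfolding tree_dist_def e by simp
qed

lemma walk_of_tree_dist:
  "f \<in> T \<Longrightarrow> g \<in> T \<Longrightarrow>
    \<exists>ws. walk T ws \<and> hd ws = f \<and> last ws = g \<and> length ws = Suc (tree_dist T f g)"
proof (induction "tree_dist T f g" arbitrary: f g rule: less_induct)
  case less
  show ?case
  proof (cases "f = g")
    case True
    then show ?thesis using less.prems by (intro exI[of _ "[f]"]) (simp add: walk_single tree_dist_self)
  next
    case False
    have "f \<notin> ancestors T g \<or> g \<notin> ancestors T f"
    proof (rule ccontr)
      assume "\<not> ?thesis"
      then have "below g f" "below f g" using False by (auto simp: ancestors_def)
      then show False using below_asym triangle less.prems by blast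
    qed
    then show ?thesis
    proof
      assume fg: "f \<notin> ancestors T g"
      have "f \<noteq> \<rho>" using fg root_ancestors less.prems by auto
      then obtain p where p: "p \<in> T" "ancestors T f = insert f (ancestors T p)" "f \<notin> ancestors T p" "2 \<le> card (f \<inter> p)"
        using parent_exists less.prems by blast
      have dist_fg: "tree_dist T f g = Suc (tree_dist T p g)" using tree_dist_parent[OF p(2,3) fg] .
      obtain ws where ws: "walk T ws" "hd ws = p" "last ws = g" "length ws = Suc (tree_dist T p g)"
        using less.hyps[of p g] dist_fg p(1) less.prems by auto
      obtain rest where wr: "ws = p # rest" using ws by (cases ws) auto
      have "walk T (f # ws)" using ws(1) wr p(4) less.prems by (simp add: walk_Cons)
      moreover have "last (f # ws) = g" using ws wr by simp
      ultimately show ?thesis using ws dist_fg by (intro exI[of _ "f # ws"]) simp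
    next
      assume gf: "g \<notin> ancestors T f"
      have "g \<noteq> \<rho>" using gf root_ancestors less.prems by auto
      then obtain q where q: "q \<in> T" "ancestors T g = insert g (ancestors T q)" "g \<notin> ancestors T q" "2 \<le> card (g \<inter> q)"
        using parent_exists less.prems by blast
      have dist_fg: "tree_dist T f g = Suc (tree_dist T f q)" using tree_dist_parent[OF q(2,3) gf] tree_dist_sym by metis
      obtain ws where ws: "walk T ws" "hd ws = f" "last ws = q" "length ws = Suc (tree_dist T f q)"
        using less.hyps[of f q] dist_fg q(1) less.prems by auto
      have ne: "ws \<noteq> []" using ws by auto
      have "walk T (ws @ [g])" using walk_snoc[OF ne] ws q less.prems by (simp add: Int_commute)
      then show ?thesis using ws dist_fg ne by (intro exI[of _ "ws @ [g]"]) simp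
    qed
  qed
qed

lemma tree_dist_le_walk_length: "walk T ws \<Longrightarrow> Suc (tree_dist T (hd ws) (last ws)) \<le> length ws"
proof (induction ws)
  case Nil then show ?case by (simp add: walk_def)
next
  case (Cons x ws)
  show ?case
  proof (cases ws)
    case Nil then show ?thesis by (simp add: tree_dist_self)
  next
    case (Cons y ys)
    have w: "x \<in> T" "2 \<le> card (x \<inter> y)" "walk T (y # ys)" using Cons.prems Cons by (auto simp: walk_Cons)
    have yT: "y \<in> T" using w(3) by (simp add: walk_def)
    have "tree_dist T x (last ws) \<le> tree_dist T x y + tree_dist T y (last ws)" using tree_dist_triangle finite_T by blast
    moreover have "tree_dist T x y \<le> 1" using tree_dist_shared_edge w yT by blast
    moreover have "Suc (tree_dist T y (last ws)) \<le> length ws" using Cons.IH w(3) Cons by simp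
    ultimately show ?thesis using Cons by simp
  qed
qed

lemma walk_hd_last_mem: "walk T ws \<Longrightarrow> hd ws \<in> T \<and> last ws \<in> T"
  by (auto simp: walk_def)

lemma tri_dist_eq_tree_dist: "f \<in> T \<Longrightarrow> g \<in> T \<Longrightarrow> tri_dist T f g = tree_dist T f g"
  unfolding tri_dist_def
proof (rule Least_equality)
  assume "f \<in> T" "g \<in> T"
  then show "\<exists>ws. walk T ws \<and> hd ws = f \<and> last ws = g \<and> length ws = tree_dist T f g + 1"
    using walk_of_tree_dist by simp
next
  fix y assume "\<exists>ws. walk T ws \<and> hd ws = f \<and> last ws = g \<and> length ws = y + 1"
  then obtain ws where "walk T ws" "hd ws = f" "last ws = g" "length ws = y + 1" by blast
  then show "tree_dist T f g \<le> y" using tree_dist_le_walk_length by fastforce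
qed

lemma vert_dist_ge_iff:
  assumes v: "v \<in> \<Union>T" and w: "w \<in> \<Union>T"
  shows "k \<le> vert_dist T v w \<longleftrightarrow>
    (\<forall>f\<in>T. \<forall>g\<in>T. v \<in> f \<longrightarrow> w \<in> g \<longrightarrow> k \<le> Suc (tree_dist T f g))"
proof -
  define P where "P = (\<lambda>p. \<exists>ws. walk T ws \<and> v \<in> hd ws \<and> w \<in> last ws \<and> length ws = p)"
  have vd: "vert_dist T v w = (LEAST p. P p)" by (simp add: vert_dist_def P_def)
  have Pw: "P (Suc (tree_dist T f g))" if "f \<in> T" "g \<in> T" "v \<in> f" "w \<in> g" for f g
    using walk_of_tree_dist[OF that(1,2)] that(3,4) unfolding P_def by auto
  obtain f0 g0 where fg0: "f0 \<in> T" "g0 \<in> T" "v \<in> f0" "w \<in> g0" using v w by auto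
  have ex: "P (LEAST p. P p)" using Pw[OF fg0] by (rule LeastI)
  show ?thesis
  proof
    assume k: "k \<le> vert_dist T v w"
    show "\<forall>f\<in>T. \<forall>g\<in>T. v \<in> f \<longrightarrow> w \<in> g \<longrightarrow> k \<le> Suc (tree_dist T f g)"
    proof (intro ballI impI)
      fix f g assume "f \<in> T" "g \<in> T" "v \<in> f" "w \<in> g"
      then have "(LEAST p. P p) \<le> Suc (tree_dist T f g)" using Pw by (intro Least_le) auto
      then show "k \<le> Suc (tree_dist T f g)" using k vd by simp
    qed
  next
    assume h: "\<forall>f\<in>T. \<forall>g\<in>T. v \<in> f \<longrightarrow> w \<in> g \<longrightarrow> k \<le> Suc (tree_dist T f g)"
    obtain ws where ws: "walk T ws" "v \<in> hd ws" "w \<in> last ws" "length ws = (LEAST p. P p)"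
      using ex unfolding P_def by blast
    have "k \<le> Suc (tree_dist T (hd ws) (last ws))" using h walk_hd_last_mem[OF ws(1)] ws by blast
    also have "\<dots> \<le> length ws" using tree_dist_le_walk_length ws(1) .
    finally show "k \<le> vert_dist T v w" using ws vd by simp
  qed
qed

lemma vert_scattered_iff_independent:
  assumes B: "B \<subseteq> \<Union>T"
  shows "vert_scattered T (Suc s) B \<longleftrightarrow> independent (vert_conflict T s) B"
proof -
  have key: "Suc s \<le> vert_dist T v w \<longleftrightarrow> \<not> vert_conflict T s v w" if "v \<in> B" "w \<in> B" for v w
  proof -
    have "v \<in> \<Union>T" "w \<in> \<Union>T" using that B by auto
    then show ?thesis by (simp add: vert_dist_ge_iff vert_conflict_def not_less)
  qed
  show ?thesis unfolding vert_scattered_def independent_def using key by auto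
qed

lemma tri_scattered_iff_independent:
  assumes B: "B \<subseteq> T"
  shows "tri_scattered T s B \<longleftrightarrow> independent (tri_conflict T s) B"
proof -
  have key: "s \<le> tri_dist T f g \<longleftrightarrow> \<not> tri_conflict T s f g" if "f \<in> B" "g \<in> B" for f g
  proof -
    have "f \<in> T" "g \<in> T" using that B by auto
    then show ?thesis using tri_dist_eq_tree_dist by (simp add: tri_conflict_def not_less)
  qed
  show ?thesis unfolding tri_scattered_def independent_def using key by auto
qed


lemma below_if_tri_mid_mem:
  assumes fT: "f \<in> T" and gT: "g \<in> T" and ne: "f \<noteq> g" and m: "tri_mid g \<in> f"
  shows "below f g"
proof (rule ccontr)
  assume nb: "\<not> below f g"
  have tf: "is_tri f" and tg: "is_tri g" using triangle fT gT by auto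
  have mf: "tri_mid g = Min f \<or> tri_mid g = tri_mid f \<or> tri_mid g = Max f" "Min f \<le> tri_mid g" "tri_mid g \<le> Max f"
    using is_tri_mem[OF tf m] by auto
  have "below g f \<or> Max f \<le> Min g \<or> Max g \<le> Min f" using laminarD[OF fT gT ne] nb by auto
  then show False using mf is_tri_D(2,3)[OF tf] is_tri_D(2,3)[OF tg] unfolding below_def
    by (elim disjE conjE; linarith)
qed

lemma ancestors_Int_eq_ancestors:
  assumes tT: "t \<in> T" and gT: "g \<in> T"
  shows "\<exists>a\<in>ancestors T t. ancestors T t \<inter> ancestors T g = ancestors T a"
proof -
  let ?U = "ancestors T t \<inter> ancestors T g"
  have finU: "finite ?U" using finite_ancestors by auto
  have "\<rho> \<in> ?U" using root_ancestors tT gT by auto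
  then obtain a where a: "a \<in> ?U"
    and amax: "\<And>x. x \<in> ?U \<Longrightarrow> card (ancestors T x) \<le> card (ancestors T a)"
    using finite_obtain_argmax[where f = "\<lambda>x. card (ancestors T x)", OF finU] by blast
  have aT: "a \<in> T" using a ancestors_subset by auto
  have "ancestors T a = ?U"
  proof
    show "ancestors T a \<subseteq> ?U" using ancestors_trans tT gT a(1) by auto
    show "?U \<subseteq> ancestors T a"
    proof
      fix x assume x: "x \<in> ?U"
      have xT: "x \<in> T" using x ancestors_subset by auto
      have "x \<in> ancestors T a \<or> a \<in> ancestors T x" using ancestors_comparable[OF tT] x a(1) by auto
      then show "x \<in> ancestors T a"
      proof
        assume "a \<in> ancestors T x"
        then have "a = x \<or> below x a" by (auto simp: ancestors_def)
        then show ?thesis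
        proof
          assume "below x a"
          then have "card (ancestors T a) < card (ancestors T x)" using ancestors_card_less xT aT by blast
          then show ?thesis using amax[OF x] by simp
        qed (use ancestors_self aT in auto)
      qed
    qed
  qed
  then show ?thesis using a(1) by auto
qed

lemma tree_dist_card_ancestors:
  "tree_dist T f g + 2 * card (ancestors T f \<inter> ancestors T g) = card (ancestors T f) + card (ancestors T g)"
  unfolding tree_dist_def using card_symdiff finite_ancestors by blast

lemma tree_dist_ancestor:
  assumes "t \<in> T" "a \<in> ancestors T t"
  shows "tree_dist T t a + card (ancestors T a) = card (ancestors T t)"
proof -
  have "ancestors T t \<inter> ancestors T a = ancestors T a" using ancestors_trans[OF assms] by auto
  then show ?thesis using tree_dist_card_ancestors[of t a] by simp
qed

lemma Union_eq_insert_tri_mid: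
  assumes g: "g \<in> S" and S: "S \<subseteq> T" and p: "p \<in> S - {g}" "Min g \<in> p" "Max g \<in> p"
  shows "\<Union>S = insert (tri_mid g) (\<Union>(S - {g}))"
proof
  have tg: "is_tri g" using triangle g S by blast
  show "\<Union>S \<subseteq> insert (tri_mid g) (\<Union>(S - {g}))"
  proof
    fix x assume "x \<in> \<Union>S"
    then obtain h where h: "h \<in> S" "x \<in> h" by blast
    show "x \<in> insert (tri_mid g) (\<Union>(S - {g}))"
    proof (cases "h = g")
      case True
      then have "x = Min g \<or> x = tri_mid g \<or> x = Max g" using is_tri_mem[OF tg] h by auto
      then show ?thesis using p by blast
    qed (use h in auto)
  qed
  show "insert (tri_mid g) (\<Union>(S - {g})) \<subseteq> \<Union>S" using g is_tri_vertices[OF tg] by auto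
qed

lemma card_Union_parent_closed:
  "S \<subseteq> T \<Longrightarrow> u \<in> S \<Longrightarrow> (\<forall>g\<in>S. g = u \<or> below g u) \<Longrightarrow>
   (\<forall>g\<in>S. g \<noteq> u \<longrightarrow> (\<exists>p\<in>S. below g p \<and> Min g \<in> p \<and> Max g \<in> p)) \<Longrightarrow>
   card (\<Union>S) = card S + 2"
proof (induction "card S" arbitrary: S rule: less_induct)
  case less
  have finS: "finite S" using less.prems(1) finite_T finite_subset by blast
  show ?case
  proof (cases "S = {u}")
    case True
    then show ?thesis using is_tri_D(5)[OF triangle] less.prems by auto
  next
    case False
    let ?V = "S - {u}"
    obtain h where h: "h \<in> ?V" using False less.prems(2) by blast
    have "finite ?V" using finS by simp
    then obtain g where g: "g \<in> ?V"
      and gmax: "\<And>x. x \<in> ?V \<Longrightarrow> card (ancestors T x) \<le> card (ancestors T g)"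
      using finite_obtain_argmax[where f = "\<lambda>x. card (ancestors T x)", OF _ h] by blast
    have gT: "g \<in> T" using g less.prems(1) by auto
    let ?S' = "S - {g}"
    have cS': "card ?S' < card S" using card_Diff1_less[OF finS, of g] g by auto
    have S'T: "?S' \<subseteq> T" using less.prems(1) by auto
    have uS': "u \<in> ?S'" using g less.prems(2) by auto
    have top': "\<forall>h\<in>?S'. h = u \<or> below h u" using less.prems(3) by auto
    have nbg: "\<not> below h g" if "h \<in> ?V" for h
    proof
      assume "below h g"
      then have "card (ancestors T g) < card (ancestors T h)" using ancestors_card_less gT that less.prems(1) by blast
      then show False using gmax[OF that] by simp
    qed
    have clo': "\<forall>h\<in>?S'. h \<noteq> u \<longrightarrow> (\<exists>p\<in>?S'. below h p \<and> Min h \<in> p \<and> Max h \<in> p)"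
    proof (intro ballI impI)
      fix h assume h: "h \<in> ?S'" "h \<noteq> u"
      obtain p where p: "p \<in> S" "below h p" "Min h \<in> p" "Max h \<in> p" using less.prems(4) h by blast
      have "p \<noteq> g" using nbg h p by auto
      then show "\<exists>p\<in>?S'. below h p \<and> Min h \<in> p \<and> Max h \<in> p" using p by auto
    qed
    have IH: "card (\<Union>?S') = card ?S' + 2" using less.hyps[OF cS' S'T uS' top' clo'] .
    obtain p where p: "p \<in> S" "below g p" "Min g \<in> p" "Max g \<in> p" using less.prems(4) g by blast
    have pg: "p \<noteq> g" using p below_irrefl triangle gT by blast
    have U: "\<Union>S = insert (tri_mid g) (\<Union>?S')"
      using Union_eq_insert_tri_mid[OF _ less.prems(1)] g p pg by blast
    have nm: "tri_mid g \<notin> \<Union>?S'"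
    proof
      assume "tri_mid g \<in> \<Union>?S'"
      then obtain f where f: "f \<in> S" "f \<noteq> g" "tri_mid g \<in> f" by blast
      have fT: "f \<in> T" using f less.prems(1) by auto
      have fb: "below f g" using below_if_tri_mid_mem[OF fT gT f(2,3)] .
      show False
      proof (cases "f = u")
        case True
        have "below g u" using less.prems(3) g by auto
        then show False using fb True below_asym triangle fT gT by blast
      next
        case False
        then show False using nbg f fb by auto
      qed
    qed
    have finU': "finite (\<Union>?S')" using finS S'T triangle is_tri_D(4) by auto
    have "card (\<Union>S) = Suc (card (\<Union>?S'))" using U nm finU' by simp
    moreover have "card S = Suc (card ?S')" using card_Suc_Diff1[OF finS, of g] g by auto
    ultimately show ?thesis using IH by simp
  qed
qed


lemma ball_top:
  assumes tT: "t \<in> T" and s: "0 < s"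
  obtains u where "u \<in> ancestors T t" "tree_dist T t u < s"
    "\<And>g. g \<in> T \<Longrightarrow> tree_dist T t g < s \<Longrightarrow> u \<in> ancestors T g"
proof -
  let ?W = "{g\<in>T. tree_dist T t g < s} \<inter> ancestors T t"
  have "t \<in> ?W" using tT s ancestors_self by (simp add: tree_dist_self)
  moreover have "finite ?W" using finite_ancestors by blast
  ultimately obtain u where u: "u \<in> ?W"
    and umin: "\<And>x. x \<in> ?W \<Longrightarrow> card (ancestors T u) \<le> card (ancestors T x)"
    using finite_obtain_argmin[where f = "\<lambda>x. card (ancestors T x)"] by blast
  have uT: "u \<in> T" and uat: "u \<in> ancestors T t" using u by auto
  have "u \<in> ancestors T g" if gT: "g \<in> T" and dg: "tree_dist T t g < s" for g
  proof -
    obtain a where a: "a \<in> ancestors T t" "ancestors T t \<inter> ancestors T g = ancestors T a"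
      using ancestors_Int_eq_ancestors[OF tT gT] by blast
    have aT: "a \<in> T" using a ancestors_subset by auto
    have "ancestors T a \<subseteq> ancestors T g" using a(2) by auto
    then have "card (ancestors T a) \<le> card (ancestors T g)" using finite_ancestors card_mono by blast
    then have "tree_dist T t a \<le> tree_dist T t g"
      using tree_dist_ancestor[OF tT a(1)] tree_dist_card_ancestors[of t g, unfolded a(2)] by linarith
    then have aW: "a \<in> ?W" using dg a aT by auto
    have "u \<in> ancestors T a"
      using ancestors_comparable[OF tT uat a(1)]
    proof
      assume "a \<in> ancestors T u"
      then have "a = u \<or> below u a" by (auto simp: ancestors_def)
      then show ?thesis
      proof
        assume "below u a"
        then have "card (ancestors T a) < card (ancestors T u)" using ancestors_card_less uT aT by blast
        then show ?thesis using umin[OF aW] by simp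
      qed (use ancestors_self aT in auto)
    qed
    then show ?thesis using a(2) by auto
  qed
  then show ?thesis using that u by blast
qed

lemma ball_parent_closed:
  assumes tT: "t \<in> T"
    and u: "u \<in> ancestors T t" "tree_dist T t u < s"
      "\<And>g. g \<in> T \<Longrightarrow> tree_dist T t g < s \<Longrightarrow> u \<in> ancestors T g"
    and g: "g \<in> T" "tree_dist T t g < s" "g \<noteq> u"
  shows "\<exists>p\<in>T. tree_dist T t p < s \<and> below g p \<and> Min g \<in> p \<and> Max g \<in> p"
proof -
  have uT: "u \<in> T" using u(1) ancestors_subset by blast
  have gbu: "below g u" using u(3)[OF g(1,2)] g(3) by (auto simp: ancestors_def)
  have "g \<noteq> \<rho>"
  proof
    assume "g = \<rho>"
    then have "below \<rho> u" using gbu by simp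
    moreover have "u = \<rho> \<or> below u \<rho>" using root_or_below uT by blast
    ultimately show False using below_asym below_irrefl triangle uT root_in by blast
  qed
  then obtain p where p: "p \<in> T" "below g p" "Min g \<in> p" "Max g \<in> p" using parent[OF g(1)] by blast
  have pa: "ancestors T g = insert g (ancestors T p)" "g \<notin> ancestors T p"
    using ancestors_parent[OF g(1) p] by auto
  have "tree_dist T t p < s"
  proof (cases "g \<in> ancestors T t")
    case False
    have "tree_dist T g t = Suc (tree_dist T p t)" using tree_dist_parent[OF pa False] .
    then show ?thesis using g(2) tree_dist_sym[of T t g] tree_dist_sym[of T t p] by simp
  next
    case True
    have "u \<in> ancestors T p" using u(3)[OF g(1,2)] pa g(3) by auto
    then have "card (ancestors T u) \<le> card (ancestors T p)"
      using ancestors_trans p(1) finite_ancestors card_mono by metis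
    moreover have "p \<in> ancestors T t"
      using ancestors_trans[OF tT True] pa ancestors_self p(1) by auto
    ultimately show ?thesis
      using tree_dist_ancestor[OF tT u(1)] tree_dist_ancestor[OF tT] u(2) by fastforce
  qed
  then show ?thesis using p by auto
qed

lemma card_Union_ball:
  assumes tT: "t \<in> T" and s: "0 < s"
  shows "card (\<Union>{g\<in>T. tree_dist T t g < s}) = card {g\<in>T. tree_dist T t g < s} + 2"
proof -
  obtain u where u: "u \<in> ancestors T t" "tree_dist T t u < s"
    "\<And>g. g \<in> T \<Longrightarrow> tree_dist T t g < s \<Longrightarrow> u \<in> ancestors T g"
    using ball_top[OF tT s] by blast
  have "u \<in> T" using u(1) ancestors_subset by blast
  then show ?thesis
    using u ball_parent_closed[OF tT u] by (intro card_Union_parent_closed) (auto simp: ancestors_def)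
qed

section \<open>Removing a deepest triangle\<close>

definition deepest :: "nat set \<Rightarrow> bool" where
  "deepest t \<longleftrightarrow> t \<in> T \<and> (\<forall>h\<in>T. card (ancestors T h) \<le> card (ancestors T t))"

lemma not_below_deepest: "deepest t \<Longrightarrow> g \<in> T \<Longrightarrow> \<not> below g t"
  using ancestors_card_less unfolding deepest_def by fastforce

lemma deepest_notin_ancestors: "deepest t \<Longrightarrow> g \<in> T \<Longrightarrow> g \<noteq> t \<Longrightarrow> t \<notin> ancestors T g"
  using not_below_deepest by (auto simp: ancestors_def)

lemma tri_mid_deepest_unique: "deepest t \<Longrightarrow> f \<in> T \<Longrightarrow> tri_mid t \<in> f \<Longrightarrow> f = t"
  using below_if_tri_mid_mem not_below_deepest unfolding deepest_def by blast

lemma deepest_ball_pairwise_close: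
  assumes dt: "deepest t" and gT: "g \<in> T" and hT: "h \<in> T"
    and dg: "tree_dist T t g < s" and dh: "tree_dist T t h < s"
  shows "tree_dist T g h < s"
proof -
  have tT: "t \<in> T" using dt by (simp add: deepest_def)
  obtain a where a: "a \<in> ancestors T t" "ancestors T t \<inter> ancestors T g = ancestors T a" using ancestors_Int_eq_ancestors[OF tT gT] by blast
  obtain b where b: "b \<in> ancestors T t" "ancestors T t \<inter> ancestors T h = ancestors T b" using ancestors_Int_eq_ancestors[OF tT hT] by blast
  have bT: "b \<in> T" and aT: "a \<in> T" using a b ancestors_subset by auto
  have cg: "card (ancestors T g) \<le> card (ancestors T t)" and ch: "card (ancestors T h) \<le> card (ancestors T t)"
    using dt gT hT by (auto simp: deepest_def)
  have fg: "tree_dist T t g + 2 * card (ancestors T a) = card (ancestors T t) + card (ancestors T g)" using tree_dist_card_ancestors a(2) by metis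
  have fh: "tree_dist T t h + 2 * card (ancestors T b) = card (ancestors T t) + card (ancestors T h)" using tree_dist_card_ancestors b(2) by metis
  have fgh: "tree_dist T g h + 2 * card (ancestors T g \<inter> ancestors T h)
      = card (ancestors T g) + card (ancestors T h)"
    by (rule tree_dist_card_ancestors)
  have finI: "finite (ancestors T g \<inter> ancestors T h)" using finite_ancestors by auto
  have "a \<in> ancestors T b \<or> b \<in> ancestors T a" using ancestors_comparable[OF tT a(1) b(1)] .
  then show ?thesis
  proof
    assume "b \<in> ancestors T a"
    then have "ancestors T b \<subseteq> ancestors T a" using ancestors_trans aT by blast
    then have "ancestors T b \<subseteq> ancestors T g \<inter> ancestors T h" using a(2) b(2) by auto
    then have "card (ancestors T b) \<le> card (ancestors T g \<inter> ancestors T h)" using card_mono finI by blast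
    then show ?thesis using fh fgh cg dh by linarith
  next
    assume "a \<in> ancestors T b"
    then have "ancestors T a \<subseteq> ancestors T b" using ancestors_trans bT by blast
    then have "ancestors T a \<subseteq> ancestors T g \<inter> ancestors T h" using a(2) b(2) by auto
    then have "card (ancestors T a) \<le> card (ancestors T g \<inter> ancestors T h)" using card_mono finI by blast
    then show ?thesis using fg fgh ch dg by linarith
  qed
qed

lemma deepest_non_root_exists:
  assumes "T \<noteq> {\<rho>}"
  obtains t where "deepest t" "t \<noteq> \<rho>"
proof -
  obtain f where f: "f \<in> T" "f \<noteq> \<rho>" using assms root_in by blast
  obtain t where t: "t \<in> T" "\<And>x. x \<in> T \<Longrightarrow> card (ancestors T x) \<le> card (ancestors T t)"
    using finite_obtain_argmax[where f = "\<lambda>x. card (ancestors T x)", OF finite_T f(1)] by blast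
  have "card (ancestors T \<rho>) < card (ancestors T f)"
    using root_or_below f ancestors_card_less root_in by blast
  then have "t \<noteq> \<rho>" using t(2)[OF f(1)] by auto
  moreover have "deepest t" using t by (simp add: deepest_def)
  ultimately show ?thesis using that by blast
qed

lemma rooted_triangulation_remove_deepest:
  assumes dt: "deepest t" and tr: "t \<noteq> \<rho>"
  shows "rooted_triangulation (T - {t}) \<rho>"
proof
  show "finite (T - {t})" using finite_T by simp
  show "\<rho> \<in> T - {t}" using root_in tr by simp
  show "is_tri f" if "f \<in> T - {t}" for f using that triangle by simp
  show "laminar (T - {t})" using laminar_T by (auto simp: laminar_def)
  show "f = \<rho> \<or> below f \<rho>" if "f \<in> T - {t}" for f using that root_or_below by simp
  show "\<exists>p\<in>T - {t}. below f p \<and> Min f \<in> p \<and> Max f \<in> p" if f: "f \<in> T - {t}" "f \<noteq> \<rho>" for f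
  proof -
    obtain p where p: "p \<in> T" "below f p" "Min f \<in> p" "Max f \<in> p" using parent f by blast
    have "p \<noteq> t" using not_below_deepest[OF dt] p f by auto
    then show ?thesis using p by auto
  qed
qed

lemma ancestors_remove_deepest:
  assumes dt: "deepest t" and g: "g \<in> T" "g \<noteq> t"
  shows "ancestors (T - {t}) g = ancestors T g"
  using deepest_notin_ancestors[OF dt g] unfolding ancestors_def by auto

lemma tree_dist_remove_deepest:
  assumes dt: "deepest t" and f: "f \<in> T - {t}" and g: "g \<in> T - {t}"
  shows "tree_dist (T - {t}) f g = tree_dist T f g"
  using ancestors_remove_deepest[OF dt] f g by (simp add: tree_dist_def)

lemma Union_remove_deepest:
  assumes dt: "deepest t" and tr: "t \<noteq> \<rho>"
  shows "\<Union>T = insert (tri_mid t) (\<Union>(T - {t}))" "tri_mid t \<notin> \<Union>(T - {t})"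
    "\<exists>p\<in>T - {t}. Min t \<in> p \<and> Max t \<in> p"
proof -
  have tT: "t \<in> T" using dt by (simp add: deepest_def)
  obtain p where p: "p \<in> T" "below t p" "Min t \<in> p" "Max t \<in> p" using parent[OF tT tr] by blast
  have pt: "p \<noteq> t" using p below_irrefl triangle tT by blast
  show "\<exists>p\<in>T - {t}. Min t \<in> p \<and> Max t \<in> p" using p pt by auto
  show "tri_mid t \<notin> \<Union>(T - {t})" using tri_mid_deepest_unique[OF dt] by auto
  show "\<Union>T = insert (tri_mid t) (\<Union>(T - {t}))"
    using Union_eq_insert_tri_mid[OF tT subset_refl] p pt by blast
qed

lemma vert_conflict_remove_deepest:
  assumes dt: "deepest t" and tr: "t \<noteq> \<rho>" and a: "a \<in> \<Union>(T - {t})" and b: "b \<in> \<Union>(T - {t})"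
  shows "vert_conflict (T - {t}) s a b \<longleftrightarrow> vert_conflict T s a b"
proof
  assume "vert_conflict (T - {t}) s a b"
  then obtain f g where fg: "f \<in> T - {t}" "g \<in> T - {t}" "a \<in> f" "b \<in> g" "tree_dist (T - {t}) f g < s"
    unfolding vert_conflict_def by blast
  then show "vert_conflict T s a b" using tree_dist_remove_deepest[OF dt fg(1,2)] unfolding vert_conflict_def by auto
next
  assume "vert_conflict T s a b"
  then obtain f g where fg: "f \<in> T" "g \<in> T" "a \<in> f" "b \<in> g" "tree_dist T f g < s"
    unfolding vert_conflict_def by blast
  have tT: "t \<in> T" using dt by (simp add: deepest_def)
  have tt: "is_tri t" using triangle tT by auto
  obtain p where p: "p \<in> T" "below t p" "Min t \<in> p" "Max t \<in> p" using parent[OF tT tr] by blast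
  have pa: "ancestors T t = insert t (ancestors T p)" "t \<notin> ancestors T p" using ancestors_parent[OF tT p] by auto
  have pt: "p \<noteq> t" using p below_irrefl triangle tT by blast
  have mnot: "tri_mid t \<notin> \<Union>(T - {t})" using Union_remove_deepest[OF dt tr] by simp
  define r where "r x = (if x = t then p else x)" for x
  have rin: "r x \<in> T - {t}" if "x \<in> T" for x using that p pt by (auto simp: r_def)
  have mem: "y \<in> r x" if "x \<in> T" "y \<in> x" "y \<in> \<Union>(T - {t})" for x y
  proof (cases "x = t")
    case True
    then have "y = Min t \<or> y = tri_mid t \<or> y = Max t" using is_tri_mem[OF tt] that by auto
    then show ?thesis using True mnot that p by (auto simp: r_def)
  qed (use that in \<open>auto simp: r_def\<close>)
  have dist_t: "tree_dist T t x = Suc (tree_dist T p x)" if "x \<in> T" "x \<noteq> t" for x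
    using tree_dist_parent[OF pa deepest_notin_ancestors[OF dt that]] .
  have "tree_dist T (r f) (r g) \<le> tree_dist T f g"
  proof (cases "f = t")
    case True
    show ?thesis
    proof (cases "g = t")
      case True then show ?thesis using \<open>f = t\<close> by (simp add: r_def tree_dist_self)
    next
      case False then show ?thesis using \<open>f = t\<close> dist_t[OF fg(2)] by (simp add: r_def)
    qed
  next
    case False
    show ?thesis
    proof (cases "g = t")
      case True
      have e: "tree_dist T f t = Suc (tree_dist T f p)"
        using dist_t[OF fg(1) \<open>f \<noteq> t\<close>] tree_dist_sym[of T f t] tree_dist_sym[of T f p] by linarith
      then show ?thesis using True \<open>f \<noteq> t\<close> by (simp add: r_def)
    next
      case False then show ?thesis using \<open>f \<noteq> t\<close> by (simp add: r_def)
    qed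
  qed
  then have "tree_dist (T - {t}) (r f) (r g) < s" using tree_dist_remove_deepest[OF dt rin[OF fg(1)] rin[OF fg(2)]] fg(5) by simp
  moreover have "a \<in> r f" using mem[OF fg(1) fg(3) a] .
  moreover have "b \<in> r g" using mem[OF fg(2) fg(4) b] .
  ultimately show "vert_conflict (T - {t}) s a b" using rin[OF fg(1)] rin[OF fg(2)] unfolding vert_conflict_def by blast
qed


lemma clique_vert_conflict_triangle:
  assumes "f \<in> T" "0 < s"
  shows "clique (vert_conflict T s) f"
  unfolding clique_def vert_conflict_def using assms tree_dist_self by metis

lemma card_vertex_partitions_remove_deepest:
  assumes dt: "deepest t" and tr: "t \<noteq> \<rho>" and s: "0 < s"
  shows "card (indep_partitions (vert_conflict T s) (\<Union>T) (Suc m))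
     = (Suc m - (card {g\<in>T. tree_dist T t g < s} + 1))
         * card (indep_partitions (vert_conflict (T - {t}) s) (\<Union>(T - {t})) (Suc m))
       + card (indep_partitions (vert_conflict (T - {t}) s) (\<Union>(T - {t})) m)"
proof -
  let ?S = "{g\<in>T. tree_dist T t g < s}"
  let ?v = "tri_mid t"
  let ?N = "{y\<in>\<Union>(T - {t}). vert_conflict T s ?v y}"
  have tT: "t \<in> T" using dt by (simp add: deepest_def)
  have tt: "is_tri t" using triangle tT by auto
  have U: "\<Union>T = insert ?v (\<Union>(T - {t}))" and vn: "?v \<notin> \<Union>(T - {t})"
    using Union_remove_deepest[OF dt tr] by auto
  obtain p where p: "p \<in> T - {t}" "Min t \<in> p" "Max t \<in> p" using Union_remove_deepest(3)[OF dt tr] by blast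
  have N: "?N = \<Union>?S - {?v}"
  proof
    show "?N \<subseteq> \<Union>?S - {?v}"
    proof
      fix y assume y: "y \<in> ?N"
      then obtain f g where fg: "f \<in> T" "g \<in> T" "?v \<in> f" "y \<in> g" "tree_dist T f g < s"
        unfolding vert_conflict_def by blast
      have "f = t" using tri_mid_deepest_unique[OF dt fg(1,3)] .
      then show "y \<in> \<Union>?S - {?v}" using fg y vn by auto
    qed
    show "\<Union>?S - {?v} \<subseteq> ?N"
    proof
      fix y assume y: "y \<in> \<Union>?S - {?v}"
      then obtain g where g: "g \<in> T" "tree_dist T t g < s" "y \<in> g" "y \<noteq> ?v" by blast
      have "vert_conflict T s ?v y" unfolding vert_conflict_def using tT g is_tri_vertices[OF tt] by blast
      moreover have "y \<in> \<Union>(T - {t})"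
      proof (cases "g = t")
        case True
        then have "y = Min t \<or> y = Max t" using is_tri_mem[OF tt] g by auto
        then show ?thesis using p by auto
      qed (use g in auto)
      ultimately show "y \<in> ?N" by simp
    qed
  qed
  have "?v \<in> \<Union>?S" using tT s is_tri_vertices[OF tt] by (auto simp: tree_dist_self)
  moreover have "finite (\<Union>?S)" using finite_T triangle is_tri_D(4) by auto
  ultimately have "card ?N = card ?S + 1"
    unfolding N using card_Union_ball[OF tT s] by simp
  moreover have "clique (vert_conflict T s) ?N"
    unfolding clique_def
  proof (intro ballI impI)
    fix a b assume "a \<in> ?N" "b \<in> ?N"
    then obtain g h where "g \<in> T" "tree_dist T t g < s" "a \<in> g" "h \<in> T" "tree_dist T t h < s" "b \<in> h"
      unfolding N by blast
    then show "vert_conflict T s a b"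
      unfolding vert_conflict_def using deepest_ball_pairwise_close[OF dt] by blast
  qed
  moreover have "finite (\<Union>(T - {t}))" using finite_T triangle is_tri_D(4) by auto
  moreover have "indep_partitions (vert_conflict T s) (\<Union>(T - {t})) k
      = indep_partitions (vert_conflict (T - {t}) s) (\<Union>(T - {t})) k" for k
    using vert_conflict_remove_deepest[OF dt tr] by (intro indep_partitions_cong) auto
  ultimately show ?thesis
    using card_indep_partitions_insert[OF _ vn symp_vert_conflict, where m = m] U by simp
qed

lemma card_triangle_partitions_remove_deepest:
  assumes dt: "deepest t" and s: "0 < s"
  shows "card (indep_partitions (tri_conflict T s) T (Suc m))
     = (Suc m - (card {g\<in>T. tree_dist T t g < s} - 1))
         * card (indep_partitions (tri_conflict (T - {t}) s) (T - {t}) (Suc m))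
       + card (indep_partitions (tri_conflict (T - {t}) s) (T - {t}) m)"
proof -
  let ?S = "{g\<in>T. tree_dist T t g < s}"
  have tT: "t \<in> T" using dt by (simp add: deepest_def)
  have N: "{g\<in>T - {t}. tri_conflict T s t g} = ?S - {t}" by (auto simp: tri_conflict_def)
  have "t \<in> ?S" using tT s by (simp add: tree_dist_self)
  then have "card {g\<in>T - {t}. tri_conflict T s t g} = card ?S - 1"
    unfolding N using finite_T by simp
  moreover have "clique (tri_conflict T s) {g\<in>T - {t}. tri_conflict T s t g}"
    using deepest_ball_pairwise_close[OF dt] by (auto simp: clique_def tri_conflict_def)
  moreover have "indep_partitions (tri_conflict T s) (T - {t}) k
      = indep_partitions (tri_conflict (T - {t}) s) (T - {t}) k" for k
    using tree_dist_remove_deepest[OF dt] by (intro indep_partitions_cong) (auto simp: tri_conflict_def)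
  moreover have "T = insert t (T - {t})" using tT by auto
  ultimately show ?thesis
    using card_indep_partitions_insert[of "T - {t}" t "tri_conflict T s" m] finite_T symp_tri_conflict
    by (metis Diff_iff finite_Diff insertCI)
qed

lemma vertex_partitions_eq_indep_partitions:
  "{P. partition_on (\<Union>T) P \<and> card P = m \<and> (\<forall>B\<in>P. vert_scattered T (s + 1) B)}
     = indep_partitions (vert_conflict T s) (\<Union>T) m"
proof -
  have "vert_scattered T (s + 1) B \<longleftrightarrow> independent (vert_conflict T s) B"
    if "partition_on (\<Union>T) P" "B \<in> P" for P B
    using vert_scattered_iff_independent partition_onD1[OF that(1)] that(2) by (metis Suc_eq_plus1 Union_upper)
  then show ?thesis unfolding indep_partitions_def by blast
qed

lemma triangle_partitions_eq_indep_partitions: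
  "{Q. partition_on T Q \<and> card Q = m \<and> (\<forall>B\<in>Q. tri_scattered T s B)}
     = indep_partitions (tri_conflict T s) T m"
proof -
  have "tri_scattered T s B \<longleftrightarrow> independent (tri_conflict T s) B"
    if "partition_on T Q" "B \<in> Q" for Q B
    using tri_scattered_iff_independent partition_onD1[OF that(1)] that(2) by (metis Union_upper)
  then show ?thesis unfolding indep_partitions_def by blast
qed

end

lemma card_vertex_partitions_eq_triangle_partitions:
  assumes "rooted_triangulation T \<rho>" and s: "0 < s"
  shows "card (indep_partitions (vert_conflict T s) (\<Union>T) (m + 2))
           = card (indep_partitions (tri_conflict T s) T m)"
  using assms(1)
proof (induction "card T" arbitrary: T m rule: less_induct)
  case less
  interpret rooted_triangulation T \<rho> by (fact less.prems)
  have tri_root: "is_tri \<rho>" using triangle root_in by blast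
  have fin_U: "finite (\<Union>T)" using finite_T triangle is_tri_D(4) by auto
  show ?case
  proof (cases m)
    case 0
    have "card \<rho> \<le> 2" if "P \<in> indep_partitions (vert_conflict T s) (\<Union>T) 2" for P
      using card_clique_le_blocks[OF that _ clique_vert_conflict_triangle[OF root_in s] fin_U] root_in
      by blast
    then have "indep_partitions (vert_conflict T s) (\<Union>T) 2 = {}"
      using is_tri_D(5)[OF tri_root] by fastforce
    moreover have "indep_partitions (tri_conflict T s) T 0 = {}"
      using indep_partitions_0 finite_T root_in by blast
    ultimately show ?thesis using 0 by (simp add: numeral_2_eq_2)
  next
    case (Suc k)
    show ?thesis
    proof (cases "T = {\<rho>}")
      case True
      have "card (indep_partitions (vert_conflict T s) \<rho> (m + 2)) = (if m + 2 = card \<rho> then 1 else 0)"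
        using clique_vert_conflict_triangle[OF root_in s] is_tri_D(4)[OF tri_root]
        by (rule card_indep_partitions_clique)
      moreover have "card (indep_partitions (tri_conflict T s) T m) = (if m = card T then 1 else 0)"
        using True finite_T by (intro card_indep_partitions_clique) (auto simp: clique_def)
      ultimately show ?thesis using True is_tri_D(5)[OF tri_root] by simp
    next
      case False
      obtain t where dt: "deepest t" and tr: "t \<noteq> \<rho>"
        using deepest_non_root_exists[OF False] by blast
      have tT: "t \<in> T" using dt by (simp add: deepest_def)
      let ?T' = "T - {t}"
      let ?c = "card {g\<in>T. tree_dist T t g < s}"
      have IH: "card (indep_partitions (vert_conflict ?T' s) (\<Union>?T') (j + 2))
                  = card (indep_partitions (tri_conflict ?T' s) ?T' j)" for j
        using less.hyps[OF card_Diff1_less[OF finite_T tT]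
                rooted_triangulation_remove_deepest[OF dt tr]] .
      have "t \<in> {g\<in>T. tree_dist T t g < s}" using tT s by (simp add: tree_dist_self)
      moreover have "finite {g\<in>T. tree_dist T t g < s}" using finite_T by simp
      ultimately have c: "1 \<le> ?c" by (simp add: Suc_le_eq card_gt_0_iff) blast
      have "card (indep_partitions (vert_conflict T s) (\<Union>T) (m + 2))
              = (Suc (k + 2) - (?c + 1)) * card (indep_partitions (vert_conflict ?T' s) (\<Union>?T') (Suc k + 2))
                + card (indep_partitions (vert_conflict ?T' s) (\<Union>?T') (k + 2))"
        using card_vertex_partitions_remove_deepest[OF dt tr s, of "k + 2"] Suc by simp
      also have "\<dots> = (Suc k - (?c - 1)) * card (indep_partitions (tri_conflict ?T' s) ?T' (Suc k))
                + card (indep_partitions (tri_conflict ?T' s) ?T' k)"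
        using IH[of "Suc k"] IH[of k] c by simp
      also have "\<dots> = card (indep_partitions (tri_conflict T s) T m)"
        using card_triangle_partitions_remove_deepest[OF dt s, of k] Suc by simp
      finally show ?thesis .
    qed
  qed
qed

section \<open>Triangulations of a convex polygon\<close>

lemma poly_triang_bounds:
  "poly_triang i j T \<Longrightarrow> i < j \<and> finite T \<and> (\<forall>f\<in>T. is_tri f \<and> i \<le> Min f \<and> Max f \<le> j)"
proof (induction rule: poly_triang.induct)
  case (split i k j T1 T2)
  then show ?case using Min_Max_tri_mid_triple[of i k j] by (fastforce simp: is_tri_def)
qed simp

lemma poly_triang_vertices: "poly_triang i j T \<Longrightarrow> \<Union>T \<union> {i, j} = {i..j}"
proof (induction rule: poly_triang.induct)
  case (edge i)
  show ?case by auto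
next
  case (split i k j T1 T2)
  have "\<Union>({{i, k, j}} \<union> T1 \<union> T2) \<union> {i, j} = (\<Union>T1 \<union> {i, k}) \<union> (\<Union>T2 \<union> {k, j}) \<union> {i, j}"
    by auto
  also have "\<dots> = {i..j}" using split by auto
  finally show ?case .
qed

lemma poly_triang_laminar: "poly_triang i j T \<Longrightarrow> laminar T"
proof (induction rule: poly_triang.induct)
  case (edge i)
  show ?case by (simp add: laminar_def)
next
  case (split i k j T1 T2)
  let ?\<rho> = "{i, k, j}"
  have r: "Min ?\<rho> = i" "Max ?\<rho> = j" "tri_mid ?\<rho> = k" using Min_Max_tri_mid_triple split.hyps(1,2) by auto
  have b1: "f \<in> T1 \<Longrightarrow> below f ?\<rho>" and b2: "g \<in> T2 \<Longrightarrow> below g ?\<rho>"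
    and apart: "f \<in> T1 \<Longrightarrow> g \<in> T2 \<Longrightarrow> Max f \<le> Min g" for f g
    using poly_triang_bounds[OF split.hyps(3)] poly_triang_bounds[OF split.hyps(4)] r
    by (fastforce simp: below_def)+
  show ?case
    using split.IH b1 b2 apart unfolding laminar_def by (metis Un_iff singletonD)
qed

lemma poly_triang_rooted:
  "poly_triang i j T \<Longrightarrow> T \<noteq> {} \<Longrightarrow>
    \<exists>\<rho>\<in>T. Min \<rho> = i \<and> Max \<rho> = j \<and> rooted_triangulation T \<rho>"
proof (induction rule: poly_triang.induct)
  case (split i k j T1 T2)
  let ?\<rho> = "{i, k, j}"
  let ?T = "{?\<rho>} \<union> T1 \<union> T2"
  have r: "Min ?\<rho> = i" "Max ?\<rho> = j" "tri_mid ?\<rho> = k" "is_tri ?\<rho>"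
    using Min_Max_tri_mid_triple split.hyps(1,2) unfolding is_tri_def by auto
  have bd1: "finite T1" "\<forall>f\<in>T1. is_tri f \<and> i \<le> Min f \<and> Max f \<le> k"
    and bd2: "finite T2" "\<forall>f\<in>T2. is_tri f \<and> k \<le> Min f \<and> Max f \<le> j"
    using poly_triang_bounds[OF split.hyps(3)] poly_triang_bounds[OF split.hyps(4)] by auto
  have below_root: "f \<in> T1 \<union> T2 \<Longrightarrow> below f ?\<rho>" for f
    using bd1 bd2 r unfolding below_def by auto
  have parent: "\<exists>p\<in>?T. below f p \<and> Min f \<in> p \<and> Max f \<in> p"
    if f: "f \<in> S" and S: "S \<subseteq> T1 \<union> T2"
      "\<exists>\<sigma>\<in>S. Min \<sigma> = a \<and> Max \<sigma> = b \<and> rooted_triangulation S \<sigma>"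
      and ab: "a \<in> ?\<rho>" "b \<in> ?\<rho>" for f S a b
  proof -
    obtain \<sigma> where \<sigma>: "\<sigma> \<in> S" "Min \<sigma> = a" "Max \<sigma> = b" "rooted_triangulation S \<sigma>"
      using S(2) by blast
    show ?thesis
    proof (cases "f = \<sigma>")
      case True
      then show ?thesis using below_root f S(1) \<sigma>(2,3) ab by blast
    next
      case False
      then obtain p where "p \<in> S" "below f p" "Min f \<in> p" "Max f \<in> p"
        using rooted_triangulation.parent[OF \<sigma>(4) f] by blast
      then show ?thesis using S(1) by blast
    qed
  qed
  show ?case
  proof (intro bexI conjI)
    show "rooted_triangulation ?T ?\<rho>"
    proof
      show "laminar ?T" using poly_triang.split[OF split.hyps] by (rule poly_triang_laminar)
      show "\<exists>p\<in>?T. below f p \<and> Min f \<in> p \<and> Max f \<in> p" if "f \<in> ?T" "f \<noteq> ?\<rho>" for f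
      proof -
        have "f \<in> T1 \<or> f \<in> T2" using that by blast
        then show ?thesis
          using parent[of f T1 i k] parent[of f T2 k j] split.IH by blast
      qed
    qed (use bd1 bd2 r below_root in auto)
  qed (use r in auto)
qed simp

theorem corollary3p8:
  fixes n r s :: nat and T :: "nat set set"
  assumes "polygon_triangulation n T" and "r \<ge> 1" and "s \<ge> 1"
  shows "\<exists>\<phi>. bij_betw \<phi>
     {P. partition_on {0..<n} P \<and> card P = r + 2 \<and> (\<forall>B\<in>P. vert_scattered T (s + 1) B)}
     {Q. partition_on T Q \<and> card Q = r \<and> (\<forall>B\<in>Q. tri_scattered T s B)}"
proof -
  have n: "3 \<le> n" and pt: "poly_triang 0 (n - 1) T"
    using assms(1) by (auto simp: polygon_triangulation_def)
  have "T \<noteq> {}" using pt n by (cases rule: poly_triang.cases) auto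
  then obtain \<rho> where \<rho>: "Min \<rho> = 0" "Max \<rho> = n - 1" and rt: "rooted_triangulation T \<rho>"
    using poly_triang_rooted[OF pt] by blast
  interpret rooted_triangulation T \<rho> by (fact rt)
  have "{0, n - 1} \<subseteq> \<Union>T" using is_tri_vertices[OF triangle[OF root_in]] \<rho> root_in by auto
  then have "\<Union>T = \<Union>T \<union> {0, n - 1}" by blast
  also have "\<dots> = {0..n - 1}" by (rule poly_triang_vertices[OF pt])
  also have "\<dots> = {0..<n}" using n by auto
  finally have vertices: "{0..<n} = \<Union>T" by simp
  have "finite (\<Union>T)" using finite_T triangle is_tri_D(4) by auto
  then show ?thesis
    unfolding vertices vertex_partitions_eq_indep_partitions triangle_partitions_eq_indep_partitions
    using card_vertex_partitions_eq_triangle_partitions[OF rt, of s r] assms(3) finite_T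
    by (intro finite_same_card_bij finite_indep_partitions) auto
qed

end
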